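(* For all integers $n,f$ with $1\le f\le n-2$, the wait-free Consensus task $\mathrm{Cons}(f+1,f)$ is not $C$-reducible to the $f$-resilient Consensus task $\mathrm{Cons}(n,f)$.
   Context: Model: a finite set of processes runs an asynchronous algorithm communicating by reliable message passing with unbounded delays and speeds; processes fail only by crashing. Time is $\mathcal T=\mathbb N$; a failure pattern $F$ for $\Pi$ is a nondecreasing map $\mathcal T\to2^\Pi$, $Faulty(F)=\bigcup_tF(t)$. A task $T=(P,f)$ consists of a binary agreement problem $P$ (mapping $(F,\vec V)$, $\vec V\in\{0,1\}^\Pi$, to a nonempty $P(F,\vec V)\subseteq\{0,1\}$) and a resiliency degree $f$. An algorithm solves $T$ if in every run with $|Faulty(F)|\le f$ and initial values $\vec V$: every correct process eventually decides, decisions are irrevocable, no two processes decide differently, and decisions lie in $P(F,\vec V)$. Binary Consensus $\mathrm{Cons}(n,f)=(\mathrm{Cons}_{\Pi},f)$ on $\Pi=\{1,\dots,n\}$: $\mathrm{Cons}_\Pi(F,\vec V)=\{v\}$ if all entries of $\vec V$ equal $v$, and $\{0,1\}$ otherwise. Oracles: for $T=(P,f)$ on process set $\Pi'$, $\mathcal O.T$ is a black box with consultants $\Pi'$; its history is a sequence of successive consultations, in each of which every consultant may submit at most one query in $\{0,1\}$ and the oracle returns a common response $d$ with $d\in P(F,\vec V)$ for every $\vec V$ extending the partial query vector (the oracle may use the whole failure pattern, including future crashes), and every correct querier gets the response whenever at least $|\Pi'|-f$ consultants query; $\mathcal O.T$ is the most general such oracle. $C$-reduction: $T_1\le_C T_2$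 if there is an algorithm solving $T_1$ whose processes, besides message passing, may consult a single oracle $\mathcal O.T_2'$ where $T_2'$ is a renamed copy of $T_2$ whose consultant set contains or is contained in the process set of $T_1$; consultants that are not processes of $T_1$ never query and count as crashed from the start for the oracle. $\le_C$ is transitive. *)

theory Defs
  imports Main
begin

datatype 'm inp = Msg nat 'm | OResp nat bool | NoInp

(* scheduled events: deliver message with global id i, deliver the oracle
   response of consultation k, or a step with no input *)
datatype ev = Recv nat | Resp nat | Idle

(* a (deterministic) algorithm: initial state from the input value,
   transition function (new state, messages to send as (destination, msg),
   optional query submitted to the oracle), and write-once decision output *)
record ('s, 'm) alg =
  a_init :: "nat \<Rightarrow> bool \<Rightarrow> 's"
  a_step :: "nat \<Rightarrow> 's \<Rightarrow> 'm inp \<Rightarrow> 's \<times> (nat \<times> 'm) list \<times> bool option"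
  a_dec  :: "'s \<Rightarrow> bool option"

record ('s, 'm) cfg =
  c_st  :: "nat \<Rightarrow> 's"
  c_msgs :: "(nat \<times> nat \<times> 'm) list"        (* (source, destination, message), in sending order *)
  c_dlv :: "nat set"                         (* ids of delivered messages *)
  c_nq  :: "nat \<Rightarrow> nat"                    (* number of queries submitted so far by a process *)
  c_q   :: "nat \<Rightarrow> nat \<Rightarrow> bool option"      (* c_q k p: query of p in consultation k *)
  c_rsp :: "(nat \<times> nat) set"                (* (k,p): response of consultation k delivered to p *)

definition fpattern :: "nat set \<Rightarrow> (nat \<Rightarrow> nat set) \<Rightarrow> bool" where
  "fpattern P F \<longleftrightarrow> mono F \<and> (\<forall>t. F t \<subseteq> P)"

definition faulty :: "(nat \<Rightarrow> nat set) \<Rightarrow> nat set" where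
  "faulty F = (\<Union>t. F t)"

definition cons_set :: "nat set \<Rightarrow> (nat \<Rightarrow> bool) \<Rightarrow> bool set" where
  "cons_set P V = (if \<forall>p\<in>P. V p then {True} else if \<forall>p\<in>P. \<not> V p then {False} else UNIV)"

(* admissible common response of the most general oracle O.Cons on consultants Q,
   given the partial query vector qv: valid for every input vector extending qv *)
definition resp_ok :: "nat set \<Rightarrow> (nat \<Rightarrow> bool option) \<Rightarrow> bool \<Rightarrow> bool" where
  "resp_ok Q qv d \<longleftrightarrow> (\<forall>V. (\<forall>p\<in>Q. \<forall>v. qv p = Some v \<longrightarrow> V p = v) \<longrightarrow> d \<in> cons_set Q V)"

definition init_cfg :: "('s, 'm) alg \<Rightarrow> (nat \<Rightarrow> bool) \<Rightarrow> ('s, 'm) cfg" where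
  "init_cfg A V = \<lparr>c_st = (\<lambda>p. a_init A p (V p)), c_msgs = [], c_dlv = {},
                   c_nq = (\<lambda>p. 0), c_q = (\<lambda>k p. None), c_rsp = {}\<rparr>"

definition inp_of :: "(nat \<Rightarrow> bool) \<Rightarrow> ('s, 'm) cfg \<Rightarrow> ev \<Rightarrow> 'm inp" where
  "inp_of ans c e = (case e of
      Recv i \<Rightarrow> Msg (fst (c_msgs c ! i)) (snd (snd (c_msgs c ! i)))
    | Resp k \<Rightarrow> OResp k (ans k)
    | Idle \<Rightarrow> NoInp)"

(* effect of a step of process p with event e; queries of non-consultants have no effect;
   the j-th query of a consultant belongs to consultation j *)
definition exec :: "('s, 'm) alg \<Rightarrow> nat set \<Rightarrow> (nat \<Rightarrow> bool) \<Rightarrow> ('s, 'm) cfg \<Rightarrow> nat \<Rightarrow> ev \<Rightarrow> ('s, 'm) cfg" where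
  "exec A Q ans c p e =
     (case a_step A p (c_st c p) (inp_of ans c e) of (s', out, q) \<Rightarrow>
       let isq = (q \<noteq> None \<and> p \<in> Q) in
       \<lparr>c_st = (c_st c)(p := s'),
        c_msgs = c_msgs c @ map (\<lambda>(d, m). (p, d, m)) out,
        c_dlv = (case e of Recv i \<Rightarrow> insert i (c_dlv c) | _ \<Rightarrow> c_dlv c),
        c_nq = (if isq then (c_nq c)(p := Suc (c_nq c p)) else c_nq c),
        c_q = (if isq then (c_q c)(c_nq c p := (c_q c (c_nq c p))(p := q)) else c_q c),
        c_rsp = (case e of Resp k \<Rightarrow> insert (k, p) (c_rsp c) | _ \<Rightarrow> c_rsp c)\<rparr>)"

definition enabled :: "nat set \<Rightarrow> nat set \<Rightarrow> (nat \<Rightarrow> nat set) \<Rightarrow> (nat \<Rightarrow> bool) \<Rightarrow> ('s, 'm) cfg \<Rightarrow> nat \<Rightarrow> nat \<Rightarrow> ev \<Rightarrow> bool" where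
  "enabled P Q F ans c t p e \<longleftrightarrow> p \<in> P \<and> p \<notin> F t \<and>
     (case e of
        Recv i \<Rightarrow> i < length (c_msgs c) \<and> fst (snd (c_msgs c ! i)) = p \<and> i \<notin> c_dlv c
      | Resp k \<Rightarrow> c_q c k p \<noteq> None \<and> (k, p) \<notin> c_rsp c \<and> resp_ok Q (c_q c k) (ans k)
      | Idle \<Rightarrow> True)"

definition is_run :: "('s, 'm) alg \<Rightarrow> nat set \<Rightarrow> nat set \<Rightarrow> (nat \<Rightarrow> nat set) \<Rightarrow> (nat \<Rightarrow> bool) \<Rightarrow> (nat \<Rightarrow> bool)
                      \<Rightarrow> (nat \<Rightarrow> (nat \<times> ev) option) \<Rightarrow> (nat \<Rightarrow> ('s, 'm) cfg) \<Rightarrow> bool" where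
  "is_run A P Q F V ans sched C \<longleftrightarrow> C 0 = init_cfg A V \<and>
     (\<forall>t. case sched t of
            None \<Rightarrow> C (Suc t) = C t
          | Some (p, e) \<Rightarrow> enabled P Q F ans (C t) t p e \<and> C (Suc t) = exec A Q ans (C t) p e)"

(* fairness: correct processes take infinitely many steps, reliable channels,
   oracle liveness (|Q| - f2 consultants query => every correct querier is answered) *)
definition fair :: "nat set \<Rightarrow> nat set \<Rightarrow> nat \<Rightarrow> (nat \<Rightarrow> nat set) \<Rightarrow> (nat \<Rightarrow> (nat \<times> ev) option) \<Rightarrow> (nat \<Rightarrow> ('s, 'm) cfg) \<Rightarrow> bool" where
  "fair P Q f2 F sched C \<longleftrightarrow>
     (\<forall>p \<in> P - faulty F. \<forall>t. \<exists>t' \<ge> t. \<exists>e. sched t' = Some (p, e)) \<and>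
     (\<forall>t i. i < length (c_msgs (C t)) \<and> fst (snd (c_msgs (C t) ! i)) \<in> P - faulty F
            \<longrightarrow> (\<exists>t'. i \<in> c_dlv (C t'))) \<and>
     (\<forall>k p t. p \<in> P - faulty F \<and> c_q (C t) k p \<noteq> None \<and>
            (\<exists>t'. card Q - f2 \<le> card {q \<in> Q. c_q (C t') k q \<noteq> None})
            \<longrightarrow> (\<exists>t'. (k, p) \<in> c_rsp (C t')))"

(* A solves Cons(m, f1) on processes {1..m} using the oracle O.Cons on consultants Q
   with resiliency f2 (consultants outside {1..m} never query) *)
definition solves_cons_with_oracle :: "('s, 'm) alg \<Rightarrow> nat \<Rightarrow> nat \<Rightarrow> nat set \<Rightarrow> nat \<Rightarrow> bool" where
  "solves_cons_with_oracle A m f1 Q f2 \<longleftrightarrow>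
     (\<forall>F V ans sched C.
        fpattern {1..m} F \<and> card (faulty F) \<le> f1 \<and>
        is_run A {1..m} Q F V ans sched C \<and> fair {1..m} Q f2 F sched C \<longrightarrow>
          (\<forall>p \<in> {1..m} - faulty F. \<exists>t. a_dec A (c_st (C t) p) \<noteq> None) \<and>
          (\<forall>p t t' v. p \<in> {1..m} \<and> t \<le> t' \<and> a_dec A (c_st (C t) p) = Some v
                       \<longrightarrow> a_dec A (c_st (C t') p) = Some v) \<and>
          (\<forall>p q t t' v w. p \<in> {1..m} \<and> q \<in> {1..m} \<and> a_dec A (c_st (C t) p) = Some v
                       \<and> a_dec A (c_st (C t') q) = Some w \<longrightarrow> v = w) \<and>
          (\<forall>p t v. p \<in> {1..m} \<and> a_dec A (c_st (C t) p) = Some v \<longrightarrow> v \<in> cons_set {1..m} V))"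

end

theory Submission
  imports Defs "HOL-Library.Nat_Bijection"
begin

text \<open>With at least \<open>f + 2\<close> consultants and resiliency \<open>f\<close>, the oracle is only obliged to
  answer consultations in which at least two consultants query. A process running alone, the other
  \<open>f\<close> processes having crashed initially, thus never needs an answer, and by termination and
  validity it eventually decides its own input. Now let process 1 run alone with input 0 until it
  decides 0, then process 2 alone with input 1 until it decides 1; finally crash process 2 and let
  process 1 continue alone, the oracle answering every consultation with the value queried by
  process 2. These answers are valid, and they are all that oracle liveness demands because only
  processes 1 and 2 ever query. The result is a fair run with \<open>f\<close> crashes violating agreement.\<close>

lemma exec_simps:
  "c_st (exec A Q ans c p e) = (c_st c)(p := fst (a_step A p (c_st c p) (inp_of ans c e)))"
  "c_msgs (exec A Q ans c p e) =
     c_msgs c @ map (\<lambda>(d, m). (p, d, m)) (fst (snd (a_step A p (c_st c p) (inp_of ans c e))))"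
  "c_dlv (exec A Q ans c p e) = (case e of Recv i \<Rightarrow> insert i (c_dlv c) | _ \<Rightarrow> c_dlv c)"
  "c_nq (exec A Q ans c p e) =
     (if snd (snd (a_step A p (c_st c p) (inp_of ans c e))) \<noteq> None \<and> p \<in> Q
      then (c_nq c)(p := Suc (c_nq c p)) else c_nq c)"
  "c_q (exec A Q ans c p e) =
     (if snd (snd (a_step A p (c_st c p) (inp_of ans c e))) \<noteq> None \<and> p \<in> Q
      then (c_q c)(c_nq c p :=
             (c_q c (c_nq c p))(p := snd (snd (a_step A p (c_st c p) (inp_of ans c e)))))
      else c_q c)"
  "c_rsp (exec A Q ans c p e) = (case e of Resp k \<Rightarrow> insert (k, p) (c_rsp c) | _ \<Rightarrow> c_rsp c)"
  unfolding exec_def by (auto split: prod.splits simp: Let_def)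

definition local_view :: "nat \<Rightarrow> ('s, 'm) cfg \<Rightarrow> 's \<times> nat \<times> (nat \<Rightarrow> bool option)" where
  "local_view p c = (c_st c p, c_nq c p, \<lambda>k. c_q c k p)"

lemma local_view_eq_iff:
  "local_view p c = local_view p c' \<longleftrightarrow>
     c_st c p = c_st c' p \<and> c_nq c p = c_nq c' p \<and> (\<forall>k. c_q c k p = c_q c' k p)"
  by (auto simp: local_view_def fun_eq_iff)

lemma local_view_exec_other: "p \<noteq> q \<Longrightarrow> local_view q (exec A Q ans c p e) = local_view q c"
  by (simp add: local_view_eq_iff exec_simps)

lemma run_Suc:
  assumes "is_run A P Q F V ans sched C"
  shows "C (Suc t) = (case sched t of None \<Rightarrow> C t | Some (p, e) \<Rightarrow> exec A Q ans (C t) p e)"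
  using assms unfolding is_run_def by (auto split: option.splits dest: spec[of _ t])

lemma run_enabled:
  assumes "is_run A P Q F V ans sched C" and "sched t = Some (p, e)"
  shows "enabled P Q F ans (C t) t p e"
  using assms unfolding is_run_def by (auto dest: spec[of _ t])

lemma run_msgs_prefix:
  assumes run: "is_run A P Q F V ans sched C" and "t \<le> t'"
  shows "\<exists>ys. c_msgs (C t') = c_msgs (C t) @ ys"
  using assms(2)
proof (induction t' rule: dec_induct)
  case (step n)
  then obtain ys where "c_msgs (C n) = c_msgs (C t) @ ys" by blast
  then show ?case using run_Suc[OF run, of n] by (auto split: option.splits simp: exec_simps)
qed simp

lemma run_delivered_lt:
  assumes run: "is_run A P Q F V ans sched C" and "i \<in> c_dlv (C t)"
  shows "i < length (c_msgs (C t))"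
  using assms(2)
proof (induction t)
  case 0
  then show ?case using run by (simp add: is_run_def init_cfg_def)
next
  case (Suc t)
  show ?case
  proof (cases "sched t")
    case None
    then show ?thesis using Suc run_Suc[OF run, of t] by simp
  next
    case (Some a)
    then obtain p e where a: "sched t = Some (p, e)" by (cases a) auto
    have "\<And>j. e = Recv j \<Longrightarrow> j < length (c_msgs (C t))"
      using run_enabled[OF run a] by (auto simp: enabled_def)
    then show ?thesis using Suc run_Suc[OF run, of t] a
      by (cases e) (auto simp: exec_simps)
  qed
qed

lemma run_query_lt_nq:
  assumes run: "is_run A P Q F V ans sched C" and "c_q (C t) k p \<noteq> None"
  shows "k < c_nq (C t) p"
  using assms(2)
proof (induction t arbitrary: k p)
  case 0
  then show ?case using run by (simp add: is_run_def init_cfg_def)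
next
  case (Suc t)
  then show ?case using run_Suc[OF run, of t]
    by (auto simp: exec_simps split: option.splits if_splits) (metis less_SucI)+
qed

lemma run_query_persists:
  assumes run: "is_run A P Q F V ans sched C" and "t \<le> t'" and "c_q (C t) k p = Some v"
  shows "c_q (C t') k p = Some v"
  using assms(2,3)
proof (induction t' rule: dec_induct)
  case (step n)
  then have "k < c_nq (C n) p" using run_query_lt_nq[OF run] by simp
  then show ?case using step run_Suc[OF run, of n] by (auto split: option.splits simp: exec_simps)
qed simp

lemma run_querier_scheduled:
  assumes run: "is_run A P Q F V ans sched C" and "c_q (C t) k p \<noteq> None"
  shows "\<exists>t' < t. \<exists>e. sched t' = Some (p, e)"
  using assms(2)
proof (induction t arbitrary: k)
  case 0
  then show ?case using run by (simp add: is_run_def init_cfg_def)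
next
  case (Suc t)
  show ?case
  proof (cases "\<exists>t' < t. \<exists>e. sched t' = Some (p, e)")
    case True
    then show ?thesis using less_SucI by blast
  next
    case False
    then have "c_q (C t) k p = None" using Suc.IH by blast
    with Suc.prems False show ?thesis using run_Suc[OF run, of t]
      by (auto simp: exec_simps split: option.splits if_splits)
  qed
qed

lemma run_local_view_unchanged:
  assumes run: "is_run A P Q F V ans sched C" and "t1 \<le> t2"
    and idle: "\<And>t p e. t1 \<le> t \<Longrightarrow> t < t2 \<Longrightarrow> sched t = Some (p, e) \<Longrightarrow> p \<noteq> q"
  shows "local_view q (C t2) = local_view q (C t1)"
  using assms(2) idle
proof (induction t2 rule: dec_induct)
  case (step n)
  then show ?case using run_Suc[OF run, of n]
    by (auto split: option.splits simp: local_view_exec_other)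
qed simp

primrec run_of :: "('s, 'm) alg \<Rightarrow> nat set \<Rightarrow> (nat \<Rightarrow> bool) \<Rightarrow> (nat \<Rightarrow> bool)
    \<Rightarrow> (('s, 'm) cfg \<Rightarrow> nat \<Rightarrow> (nat \<times> ev) option) \<Rightarrow> nat \<Rightarrow> ('s, 'm) cfg" where
  "run_of A Q ans V S 0 = init_cfg A V"
| "run_of A Q ans V S (Suc t) = (case S (run_of A Q ans V S t) t of
      None \<Rightarrow> run_of A Q ans V S t
    | Some (p, e) \<Rightarrow> exec A Q ans (run_of A Q ans V S t) p e)"

lemma is_run_run_of:
  assumes "\<And>t p e. S (run_of A Q ans V S t) t = Some (p, e) \<Longrightarrow>
             enabled P Q F ans (run_of A Q ans V S t) t p e"
  shows "is_run A P Q F V ans (\<lambda>t. S (run_of A Q ans V S t) t) (run_of A Q ans V S)"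
  unfolding is_run_def using assms by (auto split: option.splits)

text \<open>Since \<open>prod_encode (x, s) \<ge> s\<close>, every candidate event is probed at arbitrarily late times.\<close>

definition probe :: "bool \<Rightarrow> nat \<Rightarrow> ev" where
  "probe answers t = (let x = fst (prod_decode t) in
     if even x then Recv (x div 2) else if answers then Resp (x div 2) else Idle)"

definition greedy_sched :: "nat set \<Rightarrow> nat set \<Rightarrow> (nat \<Rightarrow> nat set) \<Rightarrow> (nat \<Rightarrow> bool) \<Rightarrow> bool \<Rightarrow> nat
    \<Rightarrow> ('s, 'm) cfg \<Rightarrow> nat \<Rightarrow> (nat \<times> ev) option" where
  "greedy_sched P Q F ans answers p c t =
     Some (p, if enabled P Q F ans c t p (probe answers t) then probe answers t else Idle)"

lemma probe_Recv: "probe answers (prod_encode (2 * i, s)) = Recv i"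
  by (simp add: probe_def)

lemma probe_Resp: "probe True (prod_encode (2 * k + 1, s)) = Resp k"
  by (simp add: probe_def)

lemma greedy_sched_process: "greedy_sched P Q F ans answers p c t = Some (q, e) \<Longrightarrow> q = p"
  by (simp add: greedy_sched_def)

lemma greedy_sched_no_Resp: "greedy_sched P Q F ans False p c t = Some (q, e) \<Longrightarrow> e \<noteq> Resp k"
  by (auto simp: greedy_sched_def probe_def Let_def split: if_splits)

lemma greedy_sched_enabled:
  assumes "p \<in> P" and "p \<notin> F t" and "greedy_sched P Q F ans answers p c t = Some (q, e)"
  shows "enabled P Q F ans c t q e"
  using assms by (auto simp: greedy_sched_def enabled_def split: if_splits)

context
  fixes A :: "('s, 'm) alg" and P Q :: "nat set" and F :: "nat \<Rightarrow> nat set" and V ans :: "nat \<Rightarrow> bool"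
    and sched :: "nat \<Rightarrow> (nat \<times> ev) option" and C :: "nat \<Rightarrow> ('s, 'm) cfg"
    and T p :: nat and answers :: bool
  assumes run: "is_run A P Q F V ans sched C"
    and greedy: "\<And>t. T \<le> t \<Longrightarrow> sched t = greedy_sched P Q F ans answers p (C t) t"
    and p: "p \<in> P" and alive: "\<And>t. T \<le> t \<Longrightarrow> p \<notin> F t"
begin

lemma greedy_sched_steps: "\<exists>t' \<ge> t. \<exists>e. sched t' = Some (p, e)"
  by (rule exI[of _ "t + T"]) (simp add: greedy greedy_sched_def)

lemma greedy_sched_delivers:
  assumes i: "i < length (c_msgs (C t))" and dest: "fst (snd (c_msgs (C t) ! i)) = p"
  shows "\<exists>t'. i \<in> c_dlv (C t')"
proof -
  define t' where "t' = prod_encode (2 * i, t + T)"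
  have late: "t + T \<le> t'" unfolding t'_def by (rule le_prod_encode_2)
  obtain ys where ys: "c_msgs (C t') = c_msgs (C t) @ ys" using run_msgs_prefix[OF run] late by fastforce
  show ?thesis
  proof (cases "i \<in> c_dlv (C t')")
    case False
    then have "enabled P Q F ans (C t') t' p (Recv i)"
      using i dest ys p alive[of t'] late by (auto simp: enabled_def nth_append)
    then have "sched t' = Some (p, Recv i)"
      using greedy[of t'] late by (simp add: greedy_sched_def t'_def probe_Recv)
    then have "C (Suc t') = exec A Q ans (C t') p (Recv i)" using run_Suc[OF run, of t'] by simp
    then show ?thesis by (intro exI[of _ "Suc t'"]) (simp add: exec_simps)
  qed blast
qed

lemma greedy_sched_answers:
  assumes answers and q: "c_q (C t) k p \<noteq> None"
    and ok: "\<And>t'. T \<le> t' \<Longrightarrow> resp_ok Q (c_q (C t') k) (ans k)"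
  shows "\<exists>t'. (k, p) \<in> c_rsp (C t')"
proof -
  define t' where "t' = prod_encode (2 * k + 1, t + T)"
  have late: "t + T \<le> t'" unfolding t'_def by (rule le_prod_encode_2)
  have "c_q (C t') k p \<noteq> None" using run_query_persists[OF run, of t t'] q late by auto
  show ?thesis
  proof (cases "(k, p) \<in> c_rsp (C t')")
    case False
    then have "enabled P Q F ans (C t') t' p (Resp k)"
      using \<open>c_q (C t') k p \<noteq> None\<close> ok[of t'] p alive[of t'] late by (auto simp: enabled_def)
    moreover have "probe answers t' = Resp k"
      using \<open>answers\<close> probe_Resp[of k "t + T"] by (simp only: t'_def)
    ultimately have "sched t' = Some (p, Resp k)"
      using greedy[of t'] late by (simp add: greedy_sched_def)
    then have "C (Suc t') = exec A Q ans (C t') p (Resp k)" using run_Suc[OF run, of t'] by simp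
    then show ?thesis by (intro exI[of _ "Suc t'"]) (simp add: exec_simps)
  qed blast
qed

end

definition shift :: "nat \<Rightarrow> ev \<Rightarrow> ev" where
  "shift L e = (case e of Recv i \<Rightarrow> Recv (L + i) | _ \<Rightarrow> e)"

lemma shift_0 [simp]: "shift 0 e = e"
  by (cases e) (simp_all add: shift_def)

definition sim_shift :: "nat \<Rightarrow> nat \<Rightarrow> ('s, 'm) cfg \<Rightarrow> ('s, 'm) cfg \<Rightarrow> bool" where
  "sim_shift p L c1 c \<longleftrightarrow> local_view p c = local_view p c1 \<and>
     L \<le> length (c_msgs c) \<and> drop L (c_msgs c) = c_msgs c1 \<and> (\<forall>i. L + i \<in> c_dlv c \<longleftrightarrow> i \<in> c_dlv c1)"

lemma sim_shift_msgs:
  assumes "sim_shift p L c1 c"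
  shows "length (c_msgs c) = L + length (c_msgs c1)"
    and "i < length (c_msgs c1) \<Longrightarrow> c_msgs c ! (L + i) = c_msgs c1 ! i"
proof -
  have L: "L \<le> length (c_msgs c)" and drop: "drop L (c_msgs c) = c_msgs c1"
    using assms by (simp_all add: sim_shift_def)
  show "length (c_msgs c) = L + length (c_msgs c1)"
    using L drop by (metis le_add_diff_inverse length_drop)
  show "i < length (c_msgs c1) \<Longrightarrow> c_msgs c ! (L + i) = c_msgs c1 ! i"
    using L drop by (auto simp: nth_drop[symmetric])
qed

lemma sim_shift_exec:
  assumes sim: "sim_shift p L c1 c" and no_Resp: "\<And>k. e \<noteq> Resp k"
    and recv: "\<And>i. e = Recv i \<Longrightarrow> i < length (c_msgs c1)"
  shows "sim_shift p L (exec A Q ans1 c1 p e) (exec A Q ans c p (shift L e))"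
proof -
  have "inp_of ans c (shift L e) = inp_of ans1 c1 e"
    using sim no_Resp recv by (cases e) (auto simp: inp_of_def shift_def sim_shift_msgs)
  then have "a_step A p (c_st c p) (inp_of ans c (shift L e)) = a_step A p (c_st c1 p) (inp_of ans1 c1 e)"
    using sim by (simp add: sim_shift_def local_view_eq_iff)
  then show ?thesis
    using sim no_Resp by (cases e) (auto simp: exec_simps sim_shift_def local_view_eq_iff shift_def)
qed

lemma sim_shift_enabled:
  assumes "sim_shift p L c1 c" and "enabled P1 Q1 F1 ans1 c1 t1 p e" and "\<And>k. e \<noteq> Resp k"
    and "p \<in> P" and "p \<notin> F t"
  shows "enabled P Q F ans c t p (shift L e)"
  using assms sim_shift_msgs[OF assms(1)]
  by (cases e) (auto simp: enabled_def sim_shift_def shift_def)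

lemma replay_solo_run:
  assumes run1: "is_run A P1 Q F1 V1 ans1 sched1 C1"
    and solo: "\<And>t q e. sched1 t = Some (q, e) \<Longrightarrow> q = p \<and> (\<forall>k. e \<noteq> Resp k)"
    and step: "\<And>t. t < T \<Longrightarrow> C (Suc (T0 + t)) =
       (case sched1 t of None \<Rightarrow> C (T0 + t) | Some (q, e) \<Rightarrow> exec A Q ans (C (T0 + t)) q (shift L e))"
    and init: "sim_shift p L (C1 0) (C T0)"
    and "t \<le> T"
  shows "sim_shift p L (C1 t) (C (T0 + t)) \<and> (\<forall>q. q \<noteq> p \<longrightarrow> local_view q (C (T0 + t)) = local_view q (C T0))"
  using assms(5)
proof (induction t)
  case 0
  then show ?case using init by simp
next
  case (Suc t)
  then have sim: "sim_shift p L (C1 t) (C (T0 + t))"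
    and frame: "\<forall>q. q \<noteq> p \<longrightarrow> local_view q (C (T0 + t)) = local_view q (C T0)" by simp_all
  show ?case
  proof (cases "sched1 t")
    case None
    then show ?thesis using sim frame step[of t] Suc.prems run_Suc[OF run1, of t] by simp
  next
    case (Some a)
    then obtain e where e: "sched1 t = Some (p, e)" and no_Resp: "\<forall>k. e \<noteq> Resp k"
      using solo by (cases a) fastforce
    have recv: "\<And>i. e = Recv i \<Longrightarrow> i < length (c_msgs (C1 t))"
      using run_enabled[OF run1 e] by (auto simp: enabled_def)
    have "C (T0 + Suc t) = exec A Q ans (C (T0 + t)) p (shift L e)" using step[of t] Suc.prems e by simp
    moreover have "C1 (Suc t) = exec A Q ans1 (C1 t) p e" using run_Suc[OF run1, of t] e by simp
    ultimately show ?thesis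
      using sim_shift_exec[OF sim, of e] no_Resp recv frame by (simp add: local_view_exec_other)
  qed
qed

lemma solves_cons_with_oracleD:
  assumes "solves_cons_with_oracle A m f1 Q f2"
    and "fpattern {1..m} F" and "card (faulty F) \<le> f1"
    and "is_run A {1..m} Q F V ans sched C" and "fair {1..m} Q f2 F sched C"
  shows "p \<in> {1..m} - faulty F \<Longrightarrow> \<exists>t. a_dec A (c_st (C t) p) \<noteq> None"
    and "p \<in> {1..m} \<Longrightarrow> q \<in> {1..m} \<Longrightarrow> a_dec A (c_st (C t) p) = Some v \<Longrightarrow>
           a_dec A (c_st (C t') q) = Some w \<Longrightarrow> v = w"
    and "p \<in> {1..m} \<Longrightarrow> a_dec A (c_st (C t) p) = Some v \<Longrightarrow> v \<in> cons_set {1..m} V"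
proof -
  note run_spec = assms(1)[unfolded solves_cons_with_oracle_def, THEN spec, THEN spec, THEN spec,
      THEN spec, THEN spec, THEN mp, OF conjI[OF assms(2) conjI[OF assms(3) conjI[OF assms(4) assms(5)]]]]
  show "p \<in> {1..m} - faulty F \<Longrightarrow> \<exists>t. a_dec A (c_st (C t) p) \<noteq> None"
    using run_spec by blast
  show "p \<in> {1..m} \<Longrightarrow> q \<in> {1..m} \<Longrightarrow> a_dec A (c_st (C t) p) = Some v \<Longrightarrow>
           a_dec A (c_st (C t') q) = Some w \<Longrightarrow> v = w"
    using run_spec by blast
  show "p \<in> {1..m} \<Longrightarrow> a_dec A (c_st (C t) p) = Some v \<Longrightarrow> v \<in> cons_set {1..m} V"
    using run_spec by blast
qed

lemma faulty_const [simp]: "faulty (\<lambda>_. X) = X"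
  by (simp add: faulty_def)

lemma cons_set_const: "P \<noteq> {} \<Longrightarrow> cons_set P (\<lambda>_. v) = {v}"
  by (cases v) (auto simp: cons_set_def)

lemma card_le_1_if_subset_singleton: "A \<subseteq> {x} \<Longrightarrow> card A \<le> 1"
  using card_mono[of "{x}" A] by simp

lemma resp_ok_query: "qv q = Some v \<Longrightarrow> q \<in> Q \<Longrightarrow> resp_ok Q qv v"
  unfolding resp_ok_def cons_set_def by auto

text \<open>The oracle answers \<open>\<lambda>_. True\<close> are irrelevant: \<open>solo_sched\<close> never delivers a response.\<close>

definition solo_sched :: "nat \<Rightarrow> nat set \<Rightarrow> nat \<Rightarrow> ('s, 'm) cfg \<Rightarrow> nat \<Rightarrow> (nat \<times> ev) option" where
  "solo_sched m Q p = greedy_sched {1..m} Q (\<lambda>_. {1..m} - {p}) (\<lambda>_. True) False p"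

definition solo_run :: "('s, 'm) alg \<Rightarrow> nat set \<Rightarrow> nat \<Rightarrow> nat \<Rightarrow> bool \<Rightarrow> nat \<Rightarrow> ('s, 'm) cfg" where
  "solo_run A Q m p v = run_of A Q (\<lambda>_. True) (\<lambda>_. v) (solo_sched m Q p)"

lemma solo_sched_SomeD: "solo_sched m Q p c t = Some (q, e) \<Longrightarrow> q = p \<and> (\<forall>k. e \<noteq> Resp k)"
  unfolding solo_sched_def using greedy_sched_process greedy_sched_no_Resp by metis

lemma solo_run_is_run:
  assumes "p \<in> {1..m}"
  shows "is_run A {1..m} Q (\<lambda>_. {1..m} - {p}) (\<lambda>_. v) (\<lambda>_. True)
           (\<lambda>t. solo_sched m Q p (solo_run A Q m p v t) t) (solo_run A Q m p v)"
  unfolding solo_run_def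
  by (rule is_run_run_of) (use assms in \<open>auto simp: solo_sched_def intro: greedy_sched_enabled\<close>)

lemma solo_run_fair:
  assumes p: "p \<in> {1..m}" and card_Q: "f2 + 2 \<le> card Q"
  shows "fair {1..m} Q f2 (\<lambda>_. {1..m} - {p})
           (\<lambda>t. solo_sched m Q p (solo_run A Q m p v t) t) (solo_run A Q m p v)"
proof -
  let ?sched = "\<lambda>t. solo_sched m Q p (solo_run A Q m p v t) t"
  note run = solo_run_is_run[OF p, where A = A and Q = Q and v = v]
  have greedy: "\<And>t. 0 \<le> t \<Longrightarrow> ?sched t =
      greedy_sched {1..m} Q (\<lambda>_. {1..m} - {p}) (\<lambda>_. True) False p (solo_run A Q m p v t) t"
    by (simp add: solo_sched_def)
  have alive: "\<And>t. 0 \<le> t \<Longrightarrow> p \<notin> {1..m} - {p}" by simp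
  have correct: "{1..m} - faulty (\<lambda>_. {1..m} - {p}) = {p}" using p by auto
  have few_queriers: "card {q \<in> Q. c_q (solo_run A Q m p v t) k q \<noteq> None} < card Q - f2" for t k
  proof -
    have "{q \<in> Q. c_q (solo_run A Q m p v t) k q \<noteq> None} \<subseteq> {p}"
      using run_querier_scheduled[OF run] solo_sched_SomeD by blast
    then have "card {q \<in> Q. c_q (solo_run A Q m p v t) k q \<noteq> None} \<le> 1"
      by (rule card_le_1_if_subset_singleton)
    then show ?thesis using card_Q by linarith
  qed
  show ?thesis
    unfolding fair_def correct
    using greedy_sched_steps[OF run greedy p alive] greedy_sched_delivers[OF run greedy p alive]
      few_queriers
    by (auto simp: not_le[symmetric])
qed

lemma solo_run_decides:
  assumes sol: "solves_cons_with_oracle A m f1 Q f2"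
    and "m \<le> f1 + 1" and "f2 + 2 \<le> card Q" and p: "p \<in> {1..m}"
  shows "\<exists>T. a_dec A (c_st (solo_run A Q m p v T) p) = Some v"
proof -
  have fp: "fpattern {1..m} (\<lambda>_. {1..m} - {p})" by (auto simp: fpattern_def mono_def)
  have card: "card (faulty (\<lambda>_::nat. {1..m} - {p})) \<le> f1" using assms(2) p by simp
  note decides =
    solves_cons_with_oracleD[OF sol fp card solo_run_is_run[OF p, where v = v]
      solo_run_fair[OF p assms(3), where v = v]]
  obtain T w where w: "a_dec A (c_st (solo_run A Q m p v T) p) = Some w"
    using decides(1)[of p] p by auto
  moreover have "w = v" using decides(3)[OF p w] cons_set_const[of "{1..m}" v] p by auto
  ultimately show ?thesis by blast
qed

locale splice =
  fixes A :: "('s, 'm) alg" and Q :: "nat set" and m f2 T0 T1 :: nat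
  assumes two_le_m: "2 \<le> m" and two_in_Q: "2 \<in> Q" and card_Q: "f2 + 2 \<le> card Q"
begin

abbreviation R0 :: "nat \<Rightarrow> ('s, 'm) cfg" where "R0 \<equiv> solo_run A Q m 1 False"
abbreviation R1 :: "nat \<Rightarrow> ('s, 'm) cfg" where "R1 \<equiv> solo_run A Q m 2 True"

definition offset :: nat where "offset = length (c_msgs (R0 T0))"

text \<open>The answer to consultations in which process 2 took no part is arbitrary.\<close>

definition answer :: "nat \<Rightarrow> bool" where
  "answer k = (case c_q (R1 T1) k 2 of Some v \<Rightarrow> v | None \<Rightarrow> True)"

definition crashes :: "nat \<Rightarrow> nat set" where
  "crashes t = (if t < T0 + T1 then {3..m} else {2..m})"

definition inputs :: "nat \<Rightarrow> bool" where "inputs p = (p \<noteq> 1)"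

definition strategy :: "('s, 'm) cfg \<Rightarrow> nat \<Rightarrow> (nat \<times> ev) option" where
  "strategy c t =
     (if t < T0 then solo_sched m Q 1 (R0 t) t
      else if t < T0 + T1
        then map_option (apsnd (shift offset)) (solo_sched m Q 2 (R1 (t - T0)) (t - T0))
      else greedy_sched {1..m} Q crashes answer True 1 c t)"

definition R :: "nat \<Rightarrow> ('s, 'm) cfg" where "R = run_of A Q answer inputs strategy"

definition sched :: "nat \<Rightarrow> (nat \<times> ev) option" where "sched t = strategy (R t) t"

lemma R_Suc: "R (Suc t) = (case sched t of None \<Rightarrow> R t | Some (p, e) \<Rightarrow> exec A Q answer (R t) p e)"
  unfolding R_def sched_def by simp

lemma one_in_procs: "1 \<in> {1..m}" and two_in_procs: "2 \<in> {1..m}"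
  using two_le_m by auto

lemma R0_is_run:
  "is_run A {1..m} Q (\<lambda>_. {1..m} - {1}) (\<lambda>_. False) (\<lambda>_. True) (\<lambda>t. solo_sched m Q 1 (R0 t) t) R0"
  by (rule solo_run_is_run[OF one_in_procs])

lemma R1_is_run:
  "is_run A {1..m} Q (\<lambda>_. {1..m} - {2}) (\<lambda>_. True) (\<lambda>_. True) (\<lambda>t. solo_sched m Q 2 (R1 t) t) R1"
  by (rule solo_run_is_run[OF two_in_procs])

lemma R_replays_R0:
  assumes "t \<le> T0"
  shows "sim_shift 1 0 (R0 t) (R t) \<and> (\<forall>q. q \<noteq> 1 \<longrightarrow> local_view q (R t) = local_view q (R 0))"
proof -
  have init: "sim_shift 1 0 (R0 0) (R 0)"
    by (simp add: sim_shift_def local_view_def init_cfg_def R_def solo_run_def inputs_def)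
  have step: "R (Suc (0 + t)) = (case solo_sched m Q 1 (R0 t) t of
      None \<Rightarrow> R (0 + t) | Some (q, e) \<Rightarrow> exec A Q answer (R (0 + t)) q (shift 0 e))" if "t < T0" for t
    using that by (simp add: R_Suc sched_def strategy_def split: option.split)
  show ?thesis
    using replay_solo_run[OF R0_is_run solo_sched_SomeD[of m Q 1] step init assms] by simp
qed

lemma R_replays_R1:
  assumes "t \<le> T1"
  shows "sim_shift 2 offset (R1 t) (R (T0 + t))"
proof -
  have "c_msgs (R T0) = c_msgs (R0 T0)" and "\<And>i. i \<in> c_dlv (R T0) \<longleftrightarrow> i \<in> c_dlv (R0 T0)"
    and "local_view 2 (R T0) = local_view 2 (R 0)"
    using R_replays_R0[of T0] by (simp_all add: sim_shift_def)
  moreover have "\<And>i. offset + i \<notin> c_dlv (R0 T0)"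
    using run_delivered_lt[OF R0_is_run] by (fastforce simp: offset_def)
  ultimately have init: "sim_shift 2 offset (R1 0) (R T0)"
    by (simp add: sim_shift_def local_view_def init_cfg_def R_def solo_run_def inputs_def offset_def)
  have step: "R (Suc (T0 + t)) = (case solo_sched m Q 2 (R1 t) t of
      None \<Rightarrow> R (T0 + t) | Some (q, e) \<Rightarrow> exec A Q answer (R (T0 + t)) q (shift offset e))"
    if "t < T1" for t
    using that by (simp add: R_Suc sched_def strategy_def split: option.splits)
  show ?thesis
    using replay_solo_run[OF R1_is_run _ step init assms] solo_sched_SomeD by blast
qed

lemma strategy_enabled:
  assumes "strategy (R t) t = Some (p, e)"
  shows "enabled {1..m} Q crashes answer (R t) t p e"
proof -
  have alive1: "1 \<notin> crashes t" by (simp add: crashes_def)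
  consider "t < T0" | "T0 \<le> t" "t < T0 + T1" | "T0 + T1 \<le> t" by linarith
  then show ?thesis
  proof cases
    case 1
    then have s: "solo_sched m Q 1 (R0 t) t = Some (p, e)" using assms by (simp add: strategy_def)
    then have p: "p = 1" and no_Resp: "\<And>k. e \<noteq> Resp k" using solo_sched_SomeD by blast+
    have "sim_shift 1 0 (R0 t) (R t)" using R_replays_R0 1 by simp
    from sim_shift_enabled[where F = crashes and t = t,
        OF this run_enabled[OF R0_is_run s[unfolded p]] no_Resp one_in_procs alive1]
    show ?thesis using p by simp
  next
    case 2
    define u where "u = t - T0"
    then have t: "t = T0 + u" and u: "u < T1" using 2 by auto
    then obtain e' where s: "solo_sched m Q 2 (R1 u) u = Some (p, e')" and e: "e = shift offset e'"
      using assms 2 by (auto simp: strategy_def)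
    then have p: "p = 2" and no_Resp: "\<And>k. e' \<noteq> Resp k" using solo_sched_SomeD by blast+
    have alive2: "2 \<notin> crashes t" using 2 by (simp add: crashes_def)
    have "sim_shift 2 offset (R1 u) (R t)" using R_replays_R1 t u by simp
    from sim_shift_enabled[where F = crashes and t = t,
        OF this run_enabled[OF R1_is_run s[unfolded p]] no_Resp two_in_procs alive2]
    show ?thesis using p e by simp
  next
    case 3
    then show ?thesis
      using greedy_sched_enabled[where F = crashes and t = t, OF one_in_procs alive1] assms
      by (simp add: strategy_def)
  qed
qed

lemma R_is_run: "is_run A {1..m} Q crashes inputs answer sched R"
proof -
  have "is_run A {1..m} Q crashes inputs answer (\<lambda>t. strategy (run_of A Q answer inputs strategy t) t)
      (run_of A Q answer inputs strategy)"
    by (rule is_run_run_of) (use strategy_enabled in \<open>simp add: R_def\<close>)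
  then show ?thesis by (simp add: R_def sched_def[abs_def])
qed

lemma sched_SomeD: "sched t = Some (p, e) \<Longrightarrow> p = 1 \<or> (p = 2 \<and> t < T0 + T1)"
  using solo_sched_SomeD greedy_sched_process
  by (fastforce simp: sched_def strategy_def split: if_splits)

lemma fpattern_crashes: "fpattern {1..m} crashes"
  by (auto simp: fpattern_def mono_def crashes_def)

lemma faulty_crashes: "faulty crashes = {2..m}"
proof -
  have "crashes t \<subseteq> {2..m}" for t by (auto simp: crashes_def)
  moreover have "crashes (T0 + T1) = {2..m}" by (simp add: crashes_def)
  ultimately show ?thesis unfolding faulty_def by blast
qed

lemma answer_resp_ok:
  assumes "c_q (R t) k 2 \<noteq> None" and "T0 + T1 \<le> t'"
  shows "resp_ok Q (c_q (R t') k) (answer k)"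
proof -
  obtain v where "c_q (R t) k 2 = Some v" using assms(1) by auto
  then have "c_q (R (T0 + T1 + t)) k 2 = Some v" by (rule run_query_persists[OF R_is_run le_add2])
  moreover have "local_view 2 (R (T0 + T1 + t)) = local_view 2 (R (T0 + T1))"
    by (rule run_local_view_unchanged[OF R_is_run le_add1]) (auto dest: sched_SomeD)
  ultimately have v: "c_q (R (T0 + T1)) k 2 = Some v" by (simp add: local_view_eq_iff)
  then have "c_q (R1 T1) k 2 = Some v" using R_replays_R1[of T1] by (simp add: sim_shift_def local_view_eq_iff)
  then have "answer k = v" by (simp add: answer_def)
  then show ?thesis using run_query_persists[OF R_is_run assms(2) v] resp_ok_query two_in_Q by blast
qed

lemma R_fair: "fair {1..m} Q f2 crashes sched R"
proof -
  have correct: "{1..m} - faulty crashes = {1}" using two_le_m by (auto simp: faulty_crashes)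
  have greedy_phase:
    "\<And>t. T0 + T1 \<le> t \<Longrightarrow> sched t = greedy_sched {1..m} Q crashes answer True 1 (R t) t"
    by (simp add: sched_def strategy_def)
  have alive: "\<And>t. T0 + T1 \<le> t \<Longrightarrow> 1 \<notin> crashes t" by (simp add: crashes_def)
  note greedy = R_is_run greedy_phase one_in_procs alive
  have two_queried: "c_q (R t) k 2 \<noteq> None"
    if "card Q - f2 \<le> card {q \<in> Q. c_q (R t) k q \<noteq> None}" for t k
  proof (rule ccontr)
    assume not2: "\<not> c_q (R t) k 2 \<noteq> None"
    have "{q \<in> Q. c_q (R t) k q \<noteq> None} \<subseteq> {1}"
    proof
      fix q assume q: "q \<in> {q \<in> Q. c_q (R t) k q \<noteq> None}"
      then obtain t' e where "sched t' = Some (q, e)" using run_querier_scheduled[OF R_is_run] by blast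
      then have "q = 1 \<or> q = 2" using sched_SomeD by blast
      then show "q \<in> {1}" using q not2 by auto
    qed
    then have "card {q \<in> Q. c_q (R t) k q \<noteq> None} \<le> 1" by (rule card_le_1_if_subset_singleton)
    with that card_Q show False by linarith
  qed
  show ?thesis
    unfolding fair_def correct
  proof (intro conjI allI impI ballI)
    fix p :: nat and t assume "p \<in> {1}"
    then show "\<exists>t' \<ge> t. \<exists>e. sched t' = Some (p, e)" using greedy_sched_steps[OF greedy] by simp
  next
    fix t i assume "i < length (c_msgs (R t)) \<and> fst (snd (c_msgs (R t) ! i)) \<in> {1}"
    then show "\<exists>t'. i \<in> c_dlv (R t')" using greedy_sched_delivers[OF greedy] by auto
  next
    fix k t and p :: nat
    assume "p \<in> {1} \<and> c_q (R t) k p \<noteq> None \<and>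
      (\<exists>t'. card Q - f2 \<le> card {q \<in> Q. c_q (R t') k q \<noteq> None})"
    then show "\<exists>t'. (k, p) \<in> c_rsp (R t')"
      using greedy_sched_answers[OF greedy] answer_resp_ok two_queried by blast
  qed
qed

lemma c_st_R_T0: "c_st (R T0) 1 = c_st (R0 T0) 1"
  using R_replays_R0[of T0] by (simp add: sim_shift_def local_view_eq_iff)

lemma c_st_R_T0_T1: "c_st (R (T0 + T1)) 2 = c_st (R1 T1) 2"
  using R_replays_R1[of T1] by (simp add: sim_shift_def local_view_eq_iff)

end

theorem not_solves_cons_with_oracle:
  assumes "2 \<le> m" and "m \<le> f1 + 1" and "2 \<in> Q" and "f2 + 2 \<le> card Q"
  shows "\<not> solves_cons_with_oracle A m f1 Q f2"
proof
  assume sol: "solves_cons_with_oracle A m f1 Q f2"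
  have one: "1 \<in> {1..m}" and two: "2 \<in> {1..m}" using assms(1) by auto
  obtain T0 where T0: "a_dec A (c_st (solo_run A Q m 1 False T0) 1) = Some False"
    using solo_run_decides[OF sol assms(2,4) one] by blast
  obtain T1 where T1: "a_dec A (c_st (solo_run A Q m 2 True T1) 2) = Some True"
    using solo_run_decides[OF sol assms(2,4) two] by blast
  interpret splice A Q m f2 T0 T1 using assms by unfold_locales
  have "card (faulty crashes) \<le> f1" using assms(2) by (simp add: faulty_crashes)
  note agreement = solves_cons_with_oracleD(2)[OF sol fpattern_crashes this R_is_run R_fair one two]
  have "a_dec A (c_st (R T0) 1) = Some False" using T0 c_st_R_T0 by simp
  moreover have "a_dec A (c_st (R (T0 + T1)) 2) = Some True" using T1 c_st_R_T0_T1 by simp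
  ultimately show False using agreement by blast
qed

theorem mainTheorem17:
  fixes n f :: nat and Q :: "nat set" and A :: "('s, 'm) alg"
  assumes "1 \<le> f" and "f + 2 \<le> n"
    and "finite Q" and "card Q = n"
    and "Q \<subseteq> {1..f+1} \<or> {1..f+1} \<subseteq> Q"
  shows "\<not> solves_cons_with_oracle A (f + 1) f Q f"
proof -
  have "\<not> Q \<subseteq> {1..f+1}"
  proof
    assume "Q \<subseteq> {1..f+1}"
    then have "card Q \<le> f + 1" using card_mono[of "{1..f+1}" Q] by simp
    then show False using assms(2,4) by simp
  qed
  then have "{1..f+1} \<subseteq> Q" using assms(5) by blast
  moreover have "2 \<in> {1..f+1}" using assms(1) by simp
  ultimately have "2 \<in> Q" by blast
  then show ?thesis by (intro not_solves_cons_with_oracle) (use assms in auto)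
qed

end
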